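(* Fix $i\in[n]$, arbitrary $\mathbf{b}_{-i}^{(1)},\dots,\mathbf{b}_{-i}^{(T)}\in B^{n-1}$, and formats $\mathcal{M}^{(1)},\dots,\mathcal{M}^{(T)}$ all satisfying allocation monotonicity. Suppose bidder $i$ uses $s_{i,\boldsymbol{\pi}^{(t)}}$ at each round $t$, for some quantile strategies $\boldsymbol{\pi}^{(t)}\in\Delta([K+1])$. Then \[ \max_{s\in\mathcal{S}}\sum_{t\in[T]}\big(u_i^{(t)}(s)-u_i^{(t)}(s_{i,\boldsymbol{\pi}^{(t)}})\big)=\max_{\boldsymbol{\pi}\in\Delta([K+1])}\sum_{t\in[T]}\big(q_i^{(t)}(\boldsymbol{\pi})-q_i^{(t)}(\boldsymbol{\pi}^{(t)})\big). \]
   Context: Bidder $i$'s value $v_i\in[0,1]$ is drawn from a continuous distribution $\mathcal{D}_i$ on $[0,1]$ with CDF $F_i$ and quantile function $F_i^{-1}(y):=\inf\{v\in[0,1]:F_i(v)\ge y\}$. The bid set is $B:=\{j/K:j=0,\dots,K\}$; $\mathcal{S}$ is the set of all functions $s:[0,1]\to B$. Auction formats $\mathcal{M}^{(t)}=(\mathbf{x}^{(t)},\mathbf{p}^{(t)})$, $\mathbf{x}^{(t)}:B^n\to\Delta([n])$ (nonnegative entries summing to at most 1), $\mathbf{p}^{(t)}:B^n\to[0,1]^n$. Allocation monotonicity: $x_i^{(t)}(b_i,\mathbf{b}_{-i})\le x_i^{(t)}(b_i',\mathbf{b}_{-i})$ whenever $b_i\le b_i'$. Utility: $u_i^{(t)}(s):=\mathbb{E}_{v_i\sim\mathcal{D}_i}[x_i^{(t)}(s(v_i),\mathbf{b}_{-i}^{(t)})v_i-p_i^{(t)}(s(v_i),\mathbf{b}_{-i}^{(t)})]$.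 Quantile strategies are $\boldsymbol{\pi}\in\Delta([K+1])$ (probability simplex); with $\Pi_0:=0$, $\Pi_j:=\sum_{\ell\le j}\pi_\ell$, the strategy $s_{i,\boldsymbol{\pi}}$ bids $0$ on $[0,F_i^{-1}(\Pi_1)]$ and $\frac{j-1}{K}$ on $(F_i^{-1}(\Pi_{j-1}),F_i^{-1}(\Pi_j)]$ for $j=2,\dots,K+1$. Quantile utility: $q_i^{(t)}(\boldsymbol{\pi}):=u_i^{(t)}(s_{i,\boldsymbol{\pi}})$. *)

theory Defs
  imports "HOL-Probability.Probability" "HOL-Library.FuncSet"
begin

definition bidset :: "nat \<Rightarrow> real set" where
  "bidset K = {real j / real K | j. j \<le> K}"

definition quantile :: "real measure \<Rightarrow> real \<Rightarrow> real" where
  "quantile D y = Inf {v \<in> {0..1}. cdf D v \<ge> y}"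

definition quantile_simplex :: "nat \<Rightarrow> (nat \<Rightarrow> real) set" where
  "quantile_simplex K = {\<pi>. (\<forall>l\<in>{1..K+1}. 0 \<le> \<pi> l) \<and> (\<Sum>l=1..K+1. \<pi> l) = 1}"

definition cumsum :: "(nat \<Rightarrow> real) \<Rightarrow> nat \<Rightarrow> real" where
  "cumsum \<pi> j = (\<Sum>l=1..j. \<pi> l)"

definition qstrat :: "nat \<Rightarrow> real measure \<Rightarrow> (nat \<Rightarrow> real) \<Rightarrow> real \<Rightarrow> real" where
  "qstrat K D \<pi> v =
     (if v \<le> quantile D (cumsum \<pi> 1) then 0
      else (\<Sum>j=2..K+1. (real (j - 1) / real K) *
              indicator {quantile D (cumsum \<pi> (j - 1))<..quantile D (cumsum \<pi> j)} v))"

definition utility ::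
  "real measure \<Rightarrow> ((nat \<Rightarrow> real) \<Rightarrow> nat \<Rightarrow> real) \<Rightarrow> ((nat \<Rightarrow> real) \<Rightarrow> nat \<Rightarrow> real)
    \<Rightarrow> (nat \<Rightarrow> real) \<Rightarrow> nat \<Rightarrow> (real \<Rightarrow> real) \<Rightarrow> real" where
  "utility D x p bo i s =
     (\<integral>v. x (bo(i := s v)) i * v - p (bo(i := s v)) i \<partial>D)"

definition strategies :: "nat \<Rightarrow> (real \<Rightarrow> real) set" where
  "strategies K = {s. s \<in> borel_measurable borel \<and> (\<forall>v. s v \<in> bidset K)}"

definition valid_format ::
  "nat \<Rightarrow> nat \<Rightarrow> ((nat \<Rightarrow> real) \<Rightarrow> nat \<Rightarrow> real) \<Rightarrow> ((nat \<Rightarrow> real) \<Rightarrow> nat \<Rightarrow> real) \<Rightarrow> bool" where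
  "valid_format K n x p \<longleftrightarrow>
     (\<forall>b\<in>{..<n} \<rightarrow>\<^sub>E bidset K.
        (\<forall>k<n. 0 \<le> x b k) \<and> (\<Sum>k<n. x b k) \<le> 1 \<and> (\<forall>k<n. p b k \<in> {0..1}))"

definition alloc_monotone ::
  "nat \<Rightarrow> nat \<Rightarrow> ((nat \<Rightarrow> real) \<Rightarrow> nat \<Rightarrow> real) \<Rightarrow> bool" where
  "alloc_monotone K n x \<longleftrightarrow>
     (\<forall>j<n. \<forall>b\<in>{..<n} \<rightarrow>\<^sub>E bidset K. \<forall>b'\<in>{..<n} \<rightarrow>\<^sub>E bidset K.
        (\<forall>k. k \<noteq> j \<longrightarrow> b k = b' k) \<longrightarrow> b j \<le> b' j \<longrightarrow> x b j \<le> x b' j)"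

end

theory Submission
  imports Defs
begin

text \<open>Summed over the rounds, bidder i's utility from bid b at value v is A b * v - P b, where the
  total allocation A is monotone in b by allocation monotonicity. By single crossing, a pointwise
  best bid can be chosen monotone in v; this gives a best strategy in S that is a monotone step
  function with values in B. As the cdf F is continuous, F (F^{-1} y) = y, so taking for Pi_j the
  probability that this strategy bids at most (j-1)/K yields a quantile strategy that agrees with
  it almost surely, and hence has the same utility in every round.\<close>

lemma cdf_one_of_unit_support:
  assumes "real_distribution D" and "measure D {0..1} = 1"
  shows "cdf D 1 = 1"
proof -
  interpret real_distribution D by fact
  have "measure D {0..1} \<le> cdf D 1"
    unfolding cdf_def by (intro finite_measure_mono) auto
  then show ?thesis using assms(2) cdf_bounded_prob[of 1] by simp
qed

lemma cdf_zero_of_unit_support: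
  assumes "real_distribution D" and "measure D {0..1} = 1" and "isCont (cdf D) 0"
  shows "cdf D 0 = 0"
proof -
  interpret real_distribution D by fact
  have "cdf D 0 \<le> measure D ((UNIV - {0..1}) \<union> {0})"
    unfolding cdf_def by (intro finite_measure_mono) auto
  also have "\<dots> \<le> measure D (UNIV - {0..1}) + measure D {0}"
    by (intro measure_Un_le) auto
  also have "measure D (UNIV - {0..1}) = 0"
    using prob_compl[of "{0..1}"] assms(2) by simp
  also have "measure D {0} = 0"
    using assms(3) isCont_cdf by blast
  finally show ?thesis using cdf_nonneg[of 0] by simp
qed

lemma cdf_quantile:
  assumes D: "real_distribution D" "measure D {0..1} = 1" and cont: "\<forall>v. isCont (cdf D) v"
    and y: "0 \<le> y" "y \<le> 1"
  shows "cdf D (quantile D y) = y"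
proof -
  define S where "S = {v \<in> {0..1}. y \<le> cdf D v}"
  have q_eq: "quantile D y = Inf S"
    by (simp add: quantile_def S_def)
  have "closed S"
  proof -
    have "continuous_on UNIV (cdf D)"
      using cont by (simp add: continuous_at_imp_continuous_on)
    then have "closed {v. y \<le> cdf D v}"
      by (intro closed_Collect_le continuous_on_const)
    moreover have "S = {0..1} \<inter> {v. y \<le> cdf D v}"
      unfolding S_def by auto
    ultimately show ?thesis
      by (simp add: closed_Int)
  qed
  moreover have "1 \<in> S"
    using cdf_one_of_unit_support[OF D] y unfolding S_def by simp
  moreover have S_bdd: "bdd_below S"
    unfolding S_def by (rule bdd_belowI[of _ 0]) auto
  ultimately have "quantile D y \<in> S"
    unfolding q_eq by (intro closed_contains_Inf) auto
  then have q: "0 \<le> quantile D y" "quantile D y \<le> 1" "y \<le> cdf D (quantile D y)"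
    unfolding S_def by auto
  have "cdf D 0 \<le> y"
    using cdf_zero_of_unit_support[OF D] cont y by simp
  then obtain c where c: "0 \<le> c" "c \<le> quantile D y" "cdf D c = y"
    using IVT[of "cdf D" 0 y "quantile D y"] q cont by blast
  then have "c \<in> S"
    using q unfolding S_def by simp
  then have "quantile D y \<le> c"
    unfolding q_eq using S_bdd by (rule cInf_lower)
  then show ?thesis using c by simp
qed

lemma quantile_mono:
  assumes D: "real_distribution D" "measure D {0..1} = 1" and "y \<le> y'" "y' \<le> 1"
  shows "quantile D y \<le> quantile D y'"
  unfolding quantile_def
proof (rule cInf_superset_mono)
  show "{v \<in> {0..1}. y' \<le> cdf D v} \<noteq> {}"
    using cdf_one_of_unit_support[OF D] assms(4) by auto
  show "bdd_below {v \<in> {0..1}. y \<le> cdf D v}"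
    by (rule bdd_belowI[of _ 0]) auto
qed (use assms(3) in auto)

lemma cumsum_mono:
  assumes "\<pi> \<in> quantile_simplex K" and "l \<le> m" and "m \<le> K + 1"
  shows "cumsum \<pi> l \<le> cumsum \<pi> m"
  using assms unfolding cumsum_def quantile_simplex_def by (intro sum_mono2) auto

lemma cumsum_le_one:
  assumes "\<pi> \<in> quantile_simplex K" and "m \<le> K + 1"
  shows "cumsum \<pi> m \<le> 1"
  using cumsum_mono[OF assms] assms(1) by (simp add: cumsum_def quantile_simplex_def)

lemma grid_point_in_bidset: "k \<le> K \<Longrightarrow> real k / real K \<in> bidset K"
  unfolding bidset_def by blast

lemma finite_bidset: "finite (bidset K)"
proof -
  have "bidset K = (\<lambda>j. real j / real K) ` {..K}"
    unfolding bidset_def by auto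
  then show ?thesis by simp
qed

lemma qstrat_eq_grid_point:
  assumes "k \<le> K" and thresholds: "\<forall>j\<in>{1..K+1}. v \<le> quantile D (cumsum \<pi> j) \<longleftrightarrow> k < j"
  shows "qstrat K D \<pi> v = real k / real K"
proof (cases "k = 0")
  case True
  then show ?thesis using thresholds by (simp add: qstrat_def)
next
  case False
  let ?a = "\<lambda>j. quantile D (cumsum \<pi> j)"
  have "v \<in> {?a (j - 1)<..?a j} \<longleftrightarrow> j = k + 1" if j: "j \<in> {2..K+1}" for j
  proof -
    have "j - 1 \<in> {1..K+1}" "j \<in> {1..K+1}"
      using j by auto
    with thresholds have "v \<le> ?a (j - 1) \<longleftrightarrow> k < j - 1" "v \<le> ?a j \<longleftrightarrow> k < j"
      by blast+
    then show ?thesis using j by auto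
  qed
  then have "(\<Sum>j=2..K+1. real (j - 1) / real K * indicator {?a (j - 1)<..?a j} v)
      = (\<Sum>j=2..K+1. if j = k + 1 then real k / real K else 0)"
    by (intro sum.cong) (auto simp: indicator_def)
  also have "\<dots> = real k / real K"
    using assms(1) False by (simp add: sum.delta)
  finally show ?thesis
    using thresholds False by (simp add: qstrat_def)
qed

lemma qstrat_in_bidset:
  assumes D: "real_distribution D" "measure D {0..1} = 1" and \<pi>: "\<pi> \<in> quantile_simplex K"
  shows "qstrat K D \<pi> v \<in> bidset K"
proof (cases "\<exists>j\<in>{1..K+1}. v \<le> quantile D (cumsum \<pi> j)")
  case True
  define j0 where "j0 = (LEAST j. j \<in> {1..K+1} \<and> v \<le> quantile D (cumsum \<pi> j))"
  have j0: "j0 \<in> {1..K+1}" "v \<le> quantile D (cumsum \<pi> j0)"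
    using LeastI_ex[of "\<lambda>j. j \<in> {1..K+1} \<and> v \<le> quantile D (cumsum \<pi> j)"] True
    unfolding j0_def by blast+
  have grid: "\<forall>j\<in>{1..K+1}. v \<le> quantile D (cumsum \<pi> j) \<longleftrightarrow> j0 - 1 < j"
  proof (intro ballI iffI)
    fix j assume j: "j \<in> {1..K+1}"
    assume "v \<le> quantile D (cumsum \<pi> j)"
    then have "j0 \<le> j"
      unfolding j0_def using j by (simp add: Least_le)
    with j0(1) show "j0 - 1 < j" by arith
  next
    fix j assume j: "j \<in> {1..K+1}" and "j0 - 1 < j"
    then have "j0 \<le> j" by arith
    then have "quantile D (cumsum \<pi> j0) \<le> quantile D (cumsum \<pi> j)"
      by (rule quantile_mono[OF D cumsum_mono[OF \<pi>] cumsum_le_one[OF \<pi>]]) (use j in auto)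
    then show "v \<le> quantile D (cumsum \<pi> j)" using j0 by simp
  qed
  have "j0 - 1 \<le> K"
    using j0(1) by auto
  then show ?thesis
    using qstrat_eq_grid_point[OF _ grid] grid_point_in_bidset by simp
next
  case False
  \<comment> \<open>above the last threshold the defining formula falls through to the bid 0\<close>
  then have "qstrat K D \<pi> v = 0"
    by (auto simp: qstrat_def indicator_def intro!: sum.neutral)
  then show ?thesis using grid_point_in_bidset[of 0 K] by simp
qed

lemma qstrat_measurable: "qstrat K D \<pi> \<in> borel_measurable borel"
proof -
  have "qstrat K D \<pi> = (\<lambda>v. if v \<in> {..quantile D (cumsum \<pi> 1)} then 0 else
     (\<Sum>j=2..K+1. real (j - 1) / real K *
        indicator {quantile D (cumsum \<pi> (j - 1))<..quantile D (cumsum \<pi> j)} v))"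
    unfolding qstrat_def by (simp add: fun_eq_iff)
  also have "\<dots> \<in> borel_measurable borel"
    by (intro measurable_If_set borel_measurable_sum borel_measurable_times
        borel_measurable_indicator borel_measurable_const) auto
  finally show ?thesis .
qed

lemma qstrat_in_strategies:
  assumes "real_distribution D" "measure D {0..1} = 1" and "\<pi> \<in> quantile_simplex K"
  shows "qstrat K D \<pi> \<in> strategies K"
  using qstrat_measurable qstrat_in_bidset[OF assms] by (simp add: strategies_def)

lemma borel_measurable_compose_finite_valued:
  fixes s :: "'a \<Rightarrow> real"
  assumes s: "s \<in> borel_measurable M" "\<And>v. s v \<in> B" and "finite B"
    and g: "\<And>b. b \<in> B \<Longrightarrow> g b \<in> M \<rightarrow>\<^sub>M N"
  shows "(\<lambda>v. g (s v) v) \<in> M \<rightarrow>\<^sub>M N"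
proof (rule measurable_compose_countable'[OF g])
  have "s -` {b} \<inter> space M \<in> sets M" for b
    using s(1) by (rule measurable_sets) simp
  then show "s \<in> M \<rightarrow>\<^sub>M count_space B"
    using s(2) \<open>finite B\<close> by (simp add: measurable_count_space_eq_countable countable_finite)
qed (use \<open>finite B\<close> in \<open>simp_all add: countable_finite\<close>)

definition bid_utility ::
  "((nat \<Rightarrow> real) \<Rightarrow> nat \<Rightarrow> real) \<Rightarrow> ((nat \<Rightarrow> real) \<Rightarrow> nat \<Rightarrow> real) \<Rightarrow> (nat \<Rightarrow> real) \<Rightarrow> nat
    \<Rightarrow> real \<Rightarrow> real \<Rightarrow> real" where
  "bid_utility x p bo i b v = x (bo(i := b)) i * v - p (bo(i := b)) i"

lemma utility_eq_integral_bid_utility: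
  "utility D x p bo i s = (\<integral>v. bid_utility x p bo i (s v) v \<partial>D)"
  by (simp add: utility_def bid_utility_def)

lemma borel_measurable_bid_utility:
  assumes "s \<in> strategies K"
  shows "(\<lambda>v. bid_utility x p bo i (s v) v) \<in> borel_measurable borel"
proof (rule borel_measurable_compose_finite_valued[where g = "bid_utility x p bo i", OF _ _ finite_bidset])
  show "bid_utility x p bo i b \<in> borel_measurable borel" for b
    unfolding bid_utility_def by measurable
qed (use assms in \<open>auto simp: strategies_def\<close>)

lemma bid_profile_in_PiE:
  assumes "i < n" "bo \<in> ({..<n} - {i}) \<rightarrow>\<^sub>E bidset K" "b \<in> bidset K"
  shows "bo(i := b) \<in> {..<n} \<rightarrow>\<^sub>E bidset K"
  using assms by (auto simp: PiE_iff extensional_def)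

lemma valid_format_bounds:
  assumes "valid_format K n x p" "i < n" "b \<in> {..<n} \<rightarrow>\<^sub>E bidset K"
  shows "x b i \<in> {0..1}" "p b i \<in> {0..1}"
proof -
  have x_nonneg: "\<forall>k<n. 0 \<le> x b k" and "(\<Sum>k<n. x b k) \<le> 1" and "\<forall>k<n. p b k \<in> {0..1}"
    using assms(1,3) unfolding valid_format_def by blast+
  moreover have "x b i \<le> (\<Sum>k<n. x b k)"
    using x_nonneg assms(2) by (intro member_le_sum) auto
  ultimately show "x b i \<in> {0..1}" "p b i \<in> {0..1}"
    using assms(2) by auto
qed

lemma alloc_monotone_own_bid:
  assumes "alloc_monotone K n x" "i < n" "bo \<in> ({..<n} - {i}) \<rightarrow>\<^sub>E bidset K"
  shows "mono_on (bidset K) (\<lambda>b. x (bo(i := b)) i)"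
proof (rule mono_onI)
  fix b b' assume "b \<in> bidset K" "b' \<in> bidset K" "b \<le> b'"
  moreover from this have "bo(i := b) \<in> {..<n} \<rightarrow>\<^sub>E bidset K" "bo(i := b') \<in> {..<n} \<rightarrow>\<^sub>E bidset K"
    using assms(2,3) by (simp_all add: bid_profile_in_PiE)
  ultimately show "x (bo(i := b)) i \<le> x (bo(i := b')) i"
    using assms(1,2) unfolding alloc_monotone_def by simp
qed

lemma integrable_bid_utility:
  assumes D: "real_distribution D" "measure D {0..1} = 1"
    and format: "valid_format K n x p" "i < n" "bo \<in> ({..<n} - {i}) \<rightarrow>\<^sub>E bidset K"
    and s: "s \<in> strategies K"
  shows "integrable D (\<lambda>v. bid_utility x p bo i (s v) v)"
proof -
  interpret real_distribution D by fact
  have "AE v in D. v \<in> {0..1}"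
    using D(2) AE_in_set_eq_1[of "{0..1}"] by simp
  then have "AE v in D. norm (bid_utility x p bo i (s v) v) \<le> 2"
  proof (rule eventually_mono)
    fix v :: real assume v: "v \<in> {0..1}"
    have "s v \<in> bidset K"
      using s by (simp add: strategies_def)
    then have profile: "bo(i := s v) \<in> {..<n} \<rightarrow>\<^sub>E bidset K"
      using format(2,3) by (rule bid_profile_in_PiE[rotated 2])
    note x = valid_format_bounds(1)[OF format(1,2) profile]
    note p = valid_format_bounds(2)[OF format(1,2) profile]
    have "x (bo(i := s v)) i * v \<in> {0..1}"
      using x v by (simp add: mult_le_one)
    with p show "norm (bid_utility x p bo i (s v) v) \<le> 2"
      unfolding bid_utility_def by auto
  qed
  moreover have "(\<lambda>v. bid_utility x p bo i (s v) v) \<in> borel_measurable D"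
    using borel_measurable_bid_utility[OF s] measurable_cong_sets[of D borel borel borel] by simp
  ultimately show ?thesis
    by (rule integrable_const_bound)
qed

lemma utility_cong_AE:
  assumes "sets D = sets borel" and "s \<in> strategies K" "s' \<in> strategies K"
    and "AE v in D. s v = s' v"
  shows "utility D x p bo i s = utility D x p bo i s'"
proof -
  have measurable_eq: "borel_measurable D = borel_measurable borel"
    using assms(1) by (rule measurable_cong_sets) simp
  show ?thesis
    unfolding utility_eq_integral_bid_utility
    using assms(2-4) by (intro integral_cong_AE) (auto simp: measurable_eq borel_measurable_bid_utility)
qed

lemma sum_utility_mono:
  assumes D: "real_distribution D" "measure D {0..1} = 1"
    and formats: "\<And>t. t \<in> I \<Longrightarrow> valid_format K n (x t) (p t) \<and> bo t \<in> ({..<n} - {i}) \<rightarrow>\<^sub>E bidset K"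
    and "i < n" and s: "s \<in> strategies K" "s' \<in> strategies K"
    and dominated: "\<And>v. (\<Sum>t\<in>I. bid_utility (x t) (p t) (bo t) i (s v) v)
                         \<le> (\<Sum>t\<in>I. bid_utility (x t) (p t) (bo t) i (s' v) v)"
  shows "(\<Sum>t\<in>I. utility D (x t) (p t) (bo t) i s) \<le> (\<Sum>t\<in>I. utility D (x t) (p t) (bo t) i s')"
proof -
  have integrable: "integrable D (\<lambda>v. bid_utility (x t) (p t) (bo t) i (r v) v)"
    if "t \<in> I" "r \<in> strategies K" for t r
    using formats[OF that(1)] \<open>i < n\<close> by (intro integrable_bid_utility[OF D _ _ _ that(2)]) auto
  have "(\<Sum>t\<in>I. utility D (x t) (p t) (bo t) i r)
      = (\<integral>v. (\<Sum>t\<in>I. bid_utility (x t) (p t) (bo t) i (r v) v) \<partial>D)"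
    if "r \<in> strategies K" for r
    unfolding utility_eq_integral_bid_utility
    using integrable[OF _ that] by (intro Bochner_Integration.integral_sum[symmetric])
  moreover have "(\<integral>v. (\<Sum>t\<in>I. bid_utility (x t) (p t) (bo t) i (s v) v) \<partial>D)
      \<le> (\<integral>v. (\<Sum>t\<in>I. bid_utility (x t) (p t) (bo t) i (s' v) v) \<partial>D)"
    using integrable s dominated by (intro integral_mono integrable_sum) auto
  ultimately show ?thesis
    using s by simp
qed

lemma monotone_maximiser_of_linear_family:
  fixes A P :: "real \<Rightarrow> real" and B :: "real set"
  assumes "finite B" "B \<noteq> {}" and A_mono: "mono_on B A"
  obtains s where "mono s" "\<And>v. s v \<in> B" "\<And>v b. b \<in> B \<Longrightarrow> A b * v - P b \<le> A (s v) * v - P (s v)"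
proof -
  define G where "G b v = A b * v - P b" for b v
  \<comment> \<open>the largest maximiser is monotone: G b - G b' is nondecreasing in v whenever b' \<le> b\<close>
  define M where "M v = {b \<in> B. \<forall>b'\<in>B. G b' v \<le> G b v}" for v
  define s where "s v = Max (M v)" for v
  have "M v \<noteq> {}" for v
  proof -
    have "Max ((\<lambda>b. G b v) ` B) \<in> (\<lambda>b. G b v) ` B"
      using assms(1,2) by (intro Max_in) auto
    then obtain b where "b \<in> B" "G b v = Max ((\<lambda>b. G b v) ` B)"
      by auto
    then have "b \<in> M v"
      using assms(1) unfolding M_def by simp
    then show ?thesis by blast
  qed
  moreover have "finite (M v)" for v
    using assms(1) unfolding M_def by simp
  ultimately have s_in_M: "s v \<in> M v" and s_greatest: "b \<in> M v \<Longrightarrow> b \<le> s v" for v b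
    unfolding s_def by simp_all
  have "s v \<le> s w" if "v \<le> w" for v w
  proof (rule ccontr)
    assume "\<not> s v \<le> s w"
    then have lt: "s w < s v" by simp
    have B: "s v \<in> B" "s w \<in> B"
      using s_in_M unfolding M_def by blast+
    have "A (s w) \<le> A (s v)"
      using A_mono B lt by (simp add: mono_onD)
    then have "(A (s v) - A (s w)) * (w - v) \<ge> 0"
      using that by simp
    moreover have "G (s w) v \<le> G (s v) v"
      using s_in_M[of v] B unfolding M_def by blast
    moreover have "G (s v) w < G (s w) w"
    proof -
      have "s v \<notin> M w"
        using s_greatest[of "s v" w] lt by auto
      then obtain b where "b \<in> B" "G (s v) w < G b w"
        using B unfolding M_def by auto
      moreover have "G b w \<le> G (s w) w"
        using s_in_M[of w] \<open>b \<in> B\<close> unfolding M_def by blast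
      ultimately show ?thesis by simp
    qed
    ultimately show False
      unfolding G_def by (simp add: algebra_simps)
  qed
  then show ?thesis
    using that s_in_M unfolding M_def G_def mono_def by blast
qed

lemma AE_mem_iff_of_subset_measure_eq:
  assumes "finite_measure M" "X \<in> sets M" "Y \<in> sets M" "X \<subseteq> Y" "measure M X = measure M Y"
  shows "AE v in M. v \<in> X \<longleftrightarrow> v \<in> Y"
proof -
  interpret finite_measure M by fact
  have "Y - X \<in> sets M"
    using assms(2,3) by blast
  moreover have "{v \<in> space M. \<not> (v \<in> X \<longleftrightarrow> v \<in> Y)} = Y - X"
    using assms(4) sets.sets_into_space[OF assms(3)] by auto
  moreover have "measure M (Y - X) = 0"
    using finite_measure_Diff[OF assms(3,2,4)] assms(5) by simp
  then have "emeasure M (Y - X) = 0"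
    by (simp add: emeasure_eq_measure)
  ultimately show ?thesis
    by (simp add: AE_iff_measurable)
qed

lemma AE_mem_iff_le_of_down_closed:
  fixes M :: "real measure"
  assumes "finite_measure M" "sets M = sets borel" "L \<in> sets M"
    and down_closed: "\<And>u w. w \<in> L \<Longrightarrow> u \<le> w \<Longrightarrow> u \<in> L" and "measure M L = cdf M a"
  shows "AE v in M. v \<in> L \<longleftrightarrow> v \<le> a"
proof (cases "L \<subseteq> {..a}")
  case True
  have "AE v in M. v \<in> L \<longleftrightarrow> v \<in> {..a}"
    by (rule AE_mem_iff_of_subset_measure_eq[OF assms(1,3) _ True]) (use assms(2,5) in \<open>simp_all add: cdf_def\<close>)
  then show ?thesis
    by simp
next
  case False
  then obtain w where w: "w \<in> L" "\<not> w \<le> a"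
    by auto
  have sub: "{..a} \<subseteq> L"
  proof
    fix u assume "u \<in> {..a}"
    then have "u \<le> w"
      using w(2) by simp
    with w(1) show "u \<in> L"
      by (rule down_closed)
  qed
  have "AE v in M. v \<in> {..a} \<longleftrightarrow> v \<in> L"
    by (rule AE_mem_iff_of_subset_measure_eq[OF assms(1) _ assms(3) sub]) (use assms(2,5) in \<open>simp_all add: cdf_def\<close>)
  then show ?thesis
    by (rule eventually_mono) auto
qed

lemma cumsum_differences:
  assumes "F 0 = 0"
  shows "cumsum (\<lambda>j. F j - F (j - 1)) m = F m"
  using assms by (induction m) (simp_all add: cumsum_def)

lemma differences_in_quantile_simplex:
  assumes "F 0 = 0" "mono F" "F (K + 1) = 1"
  shows "(\<lambda>j. F j - F (j - 1)) \<in> quantile_simplex K"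
  using cumsum_differences[of F "K + 1", OF assms(1)] assms(2,3)
  by (auto simp: quantile_simplex_def cumsum_def mono_def)

lemma mono_strategy_AE_eq_qstrat:
  assumes D: "real_distribution D" "measure D {0..1} = 1" and cont: "\<forall>v. isCont (cdf D) v"
    and "0 < K" and s: "mono s" "\<And>v. s v \<in> bidset K"
  obtains \<pi> where "\<pi> \<in> quantile_simplex K" "AE v in D. qstrat K D \<pi> v = s v"
proof -
  interpret real_distribution D by fact
  define L where "L j = {v. s v \<le> (real j - 1) / real K}" for j :: nat
  define F where "F j = measure D (L j)" for j
  define \<pi> where "\<pi> j = F j - F (j - 1)" for j
  have s_grid: "\<exists>k\<le>K. s v = real k / real K" for v
    using s(2) unfolding bidset_def by blast
  have s_bounds: "0 \<le> s v" "s v \<le> 1" for v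
    using s_grid[of v] \<open>0 < K\<close> by auto
  have "(real 0 - 1) / real K < 0"
    using \<open>0 < K\<close> by simp
  then have "\<not> s v \<le> (real 0 - 1) / real K" for v
    using s_bounds(1)[of v] by linarith
  then have L_bot: "L 0 = {}"
    unfolding L_def by blast
  have L_top: "L (K + 1) = UNIV"
    using s_bounds(2) \<open>0 < K\<close> by (simp add: L_def)
  have L_mono: "mono L"
  proof (rule monoI)
    fix j j' :: nat assume "j \<le> j'"
    then have "(real j - 1) / real K \<le> (real j' - 1) / real K"
      by (intro divide_right_mono) auto
    then show "L j \<le> L j'"
      unfolding L_def by auto
  qed
  have L_sets: "L j \<in> sets D" for j
  proof -
    have "s -` {..(real j - 1) / real K} \<inter> space borel \<in> sets borel"
      using borel_measurable_mono[OF s(1)] by (rule measurable_sets) simp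
    then show ?thesis by (simp add: L_def vimage_def)
  qed
  have F_bot: "F 0 = 0" and F_top: "F (K + 1) = 1"
    using L_bot L_top prob_space by (simp_all add: F_def)
  have "mono F"
    using L_mono L_sets by (simp add: F_def mono_def finite_measure_mono)
  with F_bot F_top have \<pi>: "\<pi> \<in> quantile_simplex K"
    unfolding \<pi>_def by (intro differences_in_quantile_simplex)
  have cumsum_\<pi>: "cumsum \<pi> j = F j" for j
    unfolding \<pi>_def using F_bot by (rule cumsum_differences)
  have L_down_closed: "u \<in> L j" if "w \<in> L j" "u \<le> w" for u w j
    using monoD[OF s(1) that(2)] that(1) unfolding L_def by simp
  have "AE v in D. v \<in> L j \<longleftrightarrow> v \<le> quantile D (cumsum \<pi> j)" for j
  proof (rule AE_mem_iff_le_of_down_closed[OF finite_measure_axioms _ L_sets L_down_closed])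
    show "measure D (L j) = cdf D (quantile D (cumsum \<pi> j))"
      using cdf_quantile[OF D cont] by (simp add: cumsum_\<pi> F_def)
  qed simp_all
  then have "AE v in D. \<forall>j\<in>{1..K+1}. v \<in> L j \<longleftrightarrow> v \<le> quantile D (cumsum \<pi> j)"
    by (simp add: eventually_ball_finite)
  then have "AE v in D. qstrat K D \<pi> v = s v"
  proof (rule eventually_mono)
    fix v assume levels: "\<forall>j\<in>{1..K+1}. v \<in> L j \<longleftrightarrow> v \<le> quantile D (cumsum \<pi> j)"
    obtain k where k: "k \<le> K" "s v = real k / real K"
      using s_grid by blast
    have "v \<in> L j \<longleftrightarrow> k < j" for j
      using k \<open>0 < K\<close> by (auto simp: L_def divide_le_cancel)
    with levels have "\<forall>j\<in>{1..K+1}. v \<le> quantile D (cumsum \<pi> j) \<longleftrightarrow> k < j"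
      by blast
    with k show "qstrat K D \<pi> v = s v"
      by (simp add: qstrat_eq_grid_point)
  qed
  with \<pi> show ?thesis by (rule that)
qed

lemma monotone_best_response:
  assumes D: "real_distribution D" "measure D {0..1} = 1" and "i < n"
    and rounds: "\<And>t. t \<in> I \<Longrightarrow> valid_format K n (x t) (p t) \<and> alloc_monotone K n (x t)
                              \<and> bo t \<in> ({..<n} - {i}) \<rightarrow>\<^sub>E bidset K"
  obtains ss where "mono ss" "ss \<in> strategies K"
    "\<And>s. s \<in> strategies K \<Longrightarrow>
       (\<Sum>t\<in>I. utility D (x t) (p t) (bo t) i s) \<le> (\<Sum>t\<in>I. utility D (x t) (p t) (bo t) i ss)"
proof -
  define A where "A b = (\<Sum>t\<in>I. x t ((bo t)(i := b)) i)" for b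
  define P where "P b = (\<Sum>t\<in>I. p t ((bo t)(i := b)) i)" for b
  have total: "(\<Sum>t\<in>I. bid_utility (x t) (p t) (bo t) i b v) = A b * v - P b" for b v
    by (simp add: A_def P_def bid_utility_def sum_subtractf sum_distrib_right)
  have own_mono: "mono_on (bidset K) (\<lambda>b. x t ((bo t)(i := b)) i)" if "t \<in> I" for t
    using rounds[OF that] by (intro alloc_monotone_own_bid[OF _ \<open>i < n\<close>]) auto
  have "mono_on (bidset K) A"
  proof (rule mono_onI)
    fix b b' assume "b \<in> bidset K" "b' \<in> bidset K" "b \<le> b'"
    then show "A b \<le> A b'"
      unfolding A_def by (intro sum_mono mono_onD[OF own_mono])
  qed
  then obtain ss where ss: "mono ss" "\<And>v. ss v \<in> bidset K"
    and best: "\<And>v b. b \<in> bidset K \<Longrightarrow> A b * v - P b \<le> A (ss v) * v - P (ss v)"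
    using monotone_maximiser_of_linear_family[OF finite_bidset] grid_point_in_bidset[of 0 K] by blast
  have ss_strategy: "ss \<in> strategies K"
    using ss by (simp add: strategies_def borel_measurable_mono)
  have "(\<Sum>t\<in>I. utility D (x t) (p t) (bo t) i s) \<le> (\<Sum>t\<in>I. utility D (x t) (p t) (bo t) i ss)"
    if "s \<in> strategies K" for s
  proof (rule sum_utility_mono[OF D _ \<open>i < n\<close> that ss_strategy])
    show "(\<Sum>t\<in>I. bid_utility (x t) (p t) (bo t) i (s v) v)
        \<le> (\<Sum>t\<in>I. bid_utility (x t) (p t) (bo t) i (ss v) v)" for v
      unfolding total using best that by (simp add: strategies_def)
  qed (use rounds in blast)
  with ss(1) ss_strategy show ?thesis
    by (rule that)
qed

theorem mainTheorem4:
  fixes n K T i :: nat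
    and D :: "real measure"
    and x p :: "nat \<Rightarrow> (nat \<Rightarrow> real) \<Rightarrow> nat \<Rightarrow> real"
    and bo :: "nat \<Rightarrow> nat \<Rightarrow> real"
    and \<pi>t :: "nat \<Rightarrow> nat \<Rightarrow> real"
  assumes K_pos: "0 < K"
    and i_lt: "i < n"
    and D_dist: "real_distribution D"
    and D_supp: "measure D {0..1} = 1"
    and D_cont: "\<forall>v. isCont (cdf D) v"
    and formats: "\<forall>t\<in>{1..T}. valid_format K n (x t) (p t) \<and> alloc_monotone K n (x t)"
    and others: "\<forall>t\<in>{1..T}. bo t \<in> ({..<n} - {i}) \<rightarrow>\<^sub>E bidset K"
    and played: "\<forall>t\<in>{1..T}. \<pi>t t \<in> quantile_simplex K"
  shows "\<exists>m.
     ((\<exists>s\<in>strategies K.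
         (\<Sum>t=1..T. utility D (x t) (p t) (bo t) i s
                     - utility D (x t) (p t) (bo t) i (qstrat K D (\<pi>t t))) = m) \<and>
      (\<forall>s\<in>strategies K.
         (\<Sum>t=1..T. utility D (x t) (p t) (bo t) i s
                     - utility D (x t) (p t) (bo t) i (qstrat K D (\<pi>t t))) \<le> m)) \<and>
     ((\<exists>\<pi>\<in>quantile_simplex K.
         (\<Sum>t=1..T. utility D (x t) (p t) (bo t) i (qstrat K D \<pi>)
                     - utility D (x t) (p t) (bo t) i (qstrat K D (\<pi>t t))) = m) \<and>
      (\<forall>\<pi>\<in>quantile_simplex K.
         (\<Sum>t=1..T. utility D (x t) (p t) (bo t) i (qstrat K D \<pi>)
                     - utility D (x t) (p t) (bo t) i (qstrat K D (\<pi>t t))) \<le> m))"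
proof -
  let ?U = "\<lambda>t s. utility D (x t) (p t) (bo t) i s"
  obtain ss where ss: "mono ss" "ss \<in> strategies K"
    and ss_optimal: "\<And>s. s \<in> strategies K \<Longrightarrow> (\<Sum>t=1..T. ?U t s) \<le> (\<Sum>t=1..T. ?U t ss)"
    using monotone_best_response[OF D_dist D_supp i_lt, of "{1..T}"] formats others by blast
  obtain \<pi>0 where \<pi>0: "\<pi>0 \<in> quantile_simplex K" "AE v in D. qstrat K D \<pi>0 v = ss v"
    using mono_strategy_AE_eq_qstrat[OF D_dist D_supp D_cont K_pos ss(1)] ss(2)
    by (auto simp: strategies_def)
  have "?U t (qstrat K D \<pi>0) = ?U t ss" for t
    using \<pi>0 ss(2) qstrat_in_strategies[OF D_dist D_supp]
    by (intro utility_cong_AE) (simp_all add: real_distribution.events_eq_borel[OF D_dist])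
  then show ?thesis
    using ss(2) ss_optimal \<pi>0(1) qstrat_in_strategies[OF D_dist D_supp]
    by (intro exI[of _ "\<Sum>t=1..T. ?U t ss - ?U t (qstrat K D (\<pi>t t))"] conjI bexI)
      (auto simp: sum_subtractf)
qed

end
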